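(* Let $\beta$ be complex with $\Re(\beta)>0$ and let $a,c$ be real numbers such that $c-a(a+t)>0$, $c-(a+1)(a+t)>0$ and $c-(a+t)^2>0$ for all $t\in[0,1]$. Then \[ \frac{\Gamma(\beta)\Gamma(\beta)}{2\,\Gamma(2\beta)}=(c-(a+1)^2)\int_0^1\frac{(c-a(a+t))^{\beta}\,(c-(a+1)(a+t))^{\beta-1}}{(c-(a+t)^2)^{2\beta}}\,t^{\beta}(1-t)^{\beta-1}\,dt . \]
   Context: Powers of positive reals are principal powers. *)

theory Defs
  imports "HOL-Analysis.Analysis"
begin

end

theory Submission
  imports Defs
begin

(* The substitution u = (1 - t) X / D, where X, Y, D are the three quadratics of the hypotheses,
   maps (0,1) decreasingly onto itself, with 1 - u = t Y / D. Hence u (1 - u) = t (1 - t) X Y / D^2,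
   and K times the integrand, K = c - (a + 1)^2, is (u (1 - u))^(beta - 1) times the real weight
   K t X / D^2. This weight is not |du/dt| = S / D^2, but it equals |du/dt| (1 - omega u) / 2, where
   omega v = E (2 v - 1) / sqrt (E^2 - 4 c v (1 - v)) is odd about v = 1/2: the relation
   S^2 = D^2 (E^2 - 4 c u (1 - u)) makes omega u a function of u alone. Averaging over v -> 1 - v
   removes omega and leaves half of Euler's integral B(beta, beta) = Gamma(beta)^2 / Gamma(2 beta),
   which for complex beta is derived from the Gamma integral by Fubini's theorem. *)

section \<open>Euler's Beta integral for complex exponents\<close>

definition Gamma_integrand :: "complex \<Rightarrow> real \<Rightarrow> complex" where
  "Gamma_integrand z t = indicator {0<..} t *\<^sub>R (complex_of_real t powr (z - 1) / of_real (exp t))"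

definition Beta_integrand :: "complex \<Rightarrow> complex \<Rightarrow> real \<Rightarrow> complex" where
  "Beta_integrand x y v =
     indicator {0<..<1} v *\<^sub>R (complex_of_real v powr (x - 1) * complex_of_real (1 - v) powr (y - 1))"

lemma borel_measurable_Gamma_integrand [measurable]: "Gamma_integrand z \<in> borel_measurable borel"
  unfolding Gamma_integrand_def
  by (rule borel_measurable_continuous_on_indicator) (auto intro!: continuous_intros)

lemma borel_measurable_Beta_integrand [measurable]: "Beta_integrand x y \<in> borel_measurable borel"
  unfolding Beta_integrand_def
  by (rule borel_measurable_continuous_on_indicator) (auto intro!: continuous_intros)

lemma
  assumes "Re z > 0"
  shows integrable_Gamma_integrand: "integrable lborel (Gamma_integrand z)"
    and integral_Gamma_integrand: "integral\<^sup>L lborel (Gamma_integrand z) = Gamma z"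
proof -
  have "(\<lambda>t. complex_of_real t powr (z - 1) / of_real (exp t)) absolutely_integrable_on {0<..}"
    using absolutely_integrable_Gamma_integral'[OF assms] .
  then have "integrable lebesgue (Gamma_integrand z)"
    unfolding set_integrable_def Gamma_integrand_def .
  then show int: "integrable lborel (Gamma_integrand z)"
    by (subst (asm) integrable_completion) auto
  have "(Gamma_integrand z has_integral Gamma z) UNIV"
  proof -
    have "Gamma_integrand z
        = (\<lambda>t. if t \<in> {0<..} then complex_of_real t powr (z - 1) / of_real (exp t) else 0)"
      by (auto simp: Gamma_integrand_def fun_eq_iff)
    then show ?thesis
      using Gamma_integral_complex'[OF assms] by (simp only: has_integral_restrict_UNIV)
  qed
  then show "integral\<^sup>L lborel (Gamma_integrand z) = Gamma z"
    using has_integral_integral_lborel[OF int] by (rule has_integral_unique[rotated])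
qed

lemma integrable_Beta_integrand:
  assumes "Re x > 0" "Re y > 0"
  shows "integrable lborel (Beta_integrand x y)"
proof (rule Bochner_Integration.integrable_bound[OF _ _ AE_I2])
  show "integrable lborel (\<lambda>v. indicator {0..1} v *\<^sub>R (v powr (Re x - 1) * (1 - v) powr (Re y - 1)))"
    using integrable_Beta[of "Re x" "Re y"] assms unfolding set_integrable_def by simp
  fix v :: real
  show "norm (Beta_integrand x y v)
      \<le> norm (indicator {0..1} v *\<^sub>R (v powr (Re x - 1) * (1 - v) powr (Re y - 1)))"
    by (auto simp: Beta_integrand_def indicator_def norm_mult norm_powr_real_powr
             simp del: of_real_diff)
qed simp

lemma Gamma_integrand_mult_rescale:
  assumes "u > 0"
  shows "Gamma_integrand x (u * v) * Gamma_integrand y (u - u * v)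
       = complex_of_real u powr (x + y - 2) / of_real (exp u) * Beta_integrand x y v"
proof (cases "v \<in> {0<..<1}")
  case True
  then have "u * v > 0" "u - u * v > 0"
    using assms by (auto simp: algebra_simps)
  moreover have "complex_of_real (u * v) powr (x - 1)
      = of_real u powr (x - 1) * of_real v powr (x - 1)"
    using assms True by (simp add: powr_times_real)
  moreover have "complex_of_real (u - u * v) powr (y - 1)
      = of_real u powr (y - 1) * of_real (1 - v) powr (y - 1)"
  proof -
    have "complex_of_real (u - u * v) = of_real u * of_real (1 - v)"
      by (simp add: algebra_simps)
    then show ?thesis
      using assms True by (simp add: powr_times_real)
  qed
  moreover have "complex_of_real u powr (x + y - 2)
      = of_real u powr (x - 1) * of_real u powr (y - 1)"
    by (simp add: powr_add[symmetric] algebra_simps)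
  moreover have "exp u = exp (u * v) * exp (u - u * v)"
    by (simp add: exp_add[symmetric])
  ultimately show ?thesis
    using True by (simp add: Gamma_integrand_def Beta_integrand_def field_simps del: of_real_diff)
next
  case False
  then have "u * v \<le> 0 \<or> u - u * v \<le> 0"
    using assms by (auto simp: mult_nonneg_nonpos mult_left_mono)
  then show ?thesis
    using False by (auto simp: Gamma_integrand_def Beta_integrand_def)
qed

lemma Gamma_integrand_convolution:
  "(\<integral>t. Gamma_integrand x t * Gamma_integrand y (u - t) \<partial>lborel)
     = Gamma_integrand (x + y) u * integral\<^sup>L lborel (Beta_integrand x y)"
proof (cases "u > 0")
  case True
  have "(\<integral>t. Gamma_integrand x t * Gamma_integrand y (u - t) \<partial>lborel)
      = u *\<^sub>R (\<integral>v. Gamma_integrand x (u * v) * Gamma_integrand y (u - u * v) \<partial>lborel)"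
    using lborel_integral_real_affine[of u _ 0] True by simp
  also have "\<dots> = of_real u * of_real u powr (x + y - 2) / of_real (exp u)
                    * integral\<^sup>L lborel (Beta_integrand x y)"
    using True by (simp add: Gamma_integrand_mult_rescale scaleR_conv_of_real)
  also have "of_real u * of_real u powr (x + y - 2) = complex_of_real u powr (x + y - 1)"
  proof -
    have "x + y - 1 = 1 + (x + y - 2)"
      by simp
    then show ?thesis
      by (simp only: powr_add powr_to_1)
  qed
  finally show ?thesis
    using True by (simp add: Gamma_integrand_def)
next
  case False
  then have vanish: "Gamma_integrand x t * Gamma_integrand y (u - t) = 0" for t
    by (cases "t > 0") (auto simp: Gamma_integrand_def)
  have "(\<integral>t. Gamma_integrand x t * Gamma_integrand y (u - t) \<partial>lborel) = 0"
    by (simp only: vanish) simp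
  with False show ?thesis
    by (simp add: Gamma_integrand_def)
qed

lemma integrable_Gamma_integrand_convolution:
  assumes "Re x > 0" "Re y > 0"
  shows "integrable (lborel \<Otimes>\<^sub>M lborel)
           (\<lambda>(t, u). Gamma_integrand x t * Gamma_integrand y (u - t))"
proof (rule lborel_pair.Fubini_integrable)
  have shift: "(\<integral>u. norm (Gamma_integrand y (u - t)) \<partial>lborel)
      = (\<integral>u. norm (Gamma_integrand y u) \<partial>lborel)" for t
    using lborel_integral_real_affine[of 1 "\<lambda>u. norm (Gamma_integrand y u)" "-t"] by simp
  have "integrable lborel
      (\<lambda>t. norm (Gamma_integrand x t) * (\<integral>u. norm (Gamma_integrand y u) \<partial>lborel))"
    using integrable_Gamma_integrand[OF assms(1)] by (intro integrable_mult_left integrable_norm)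
  then show "integrable lborel (\<lambda>t. \<integral>u. norm (case (t, u) of (t, u) \<Rightarrow>
      Gamma_integrand x t * Gamma_integrand y (u - t)) \<partial>lborel)"
    by (simp only: case_prod_conv norm_mult integral_mult_right_zero shift)
  have "integrable lborel (\<lambda>u. Gamma_integrand x t * Gamma_integrand y (- t + 1 * u))" for t
    using lborel_integrable_real_affine[OF integrable_Gamma_integrand[OF assms(2)], of 1 "-t"]
    by (intro integrable_mult_right) simp
  then show "AE t in lborel. integrable lborel
      (\<lambda>u. case (t, u) of (t, u) \<Rightarrow> Gamma_integrand x t * Gamma_integrand y (u - t))"
    by simp
qed measurable

lemma Gamma_mult_Gamma_eq_Beta_integrand:
  assumes "Re x > 0" "Re y > 0"
  shows "Gamma x * Gamma y = Gamma (x + y) * integral\<^sup>L lborel (Beta_integrand x y)"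
proof -
  have shift: "(\<integral>u. Gamma_integrand y (u - t) \<partial>lborel) = integral\<^sup>L lborel (Gamma_integrand y)"
    for t
    using lborel_integral_real_affine[of 1 "Gamma_integrand y" "-t"] by simp
  have "Gamma x * Gamma y
      = integral\<^sup>L lborel (Gamma_integrand x) * integral\<^sup>L lborel (Gamma_integrand y)"
    using assms by (simp add: integral_Gamma_integrand)
  also have "\<dots> = (\<integral>t. (\<integral>u. Gamma_integrand x t * Gamma_integrand y (u - t) \<partial>lborel) \<partial>lborel)"
    by (simp add: shift)
  also have "\<dots> = (\<integral>u. (\<integral>t. Gamma_integrand x t * Gamma_integrand y (u - t) \<partial>lborel) \<partial>lborel)"
    using lborel_pair.Fubini_integral[OF integrable_Gamma_integrand_convolution[OF assms]] by simp
  also have "\<dots> = Gamma (x + y) * integral\<^sup>L lborel (Beta_integrand x y)"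
    using assms by (simp add: Gamma_integrand_convolution integral_Gamma_integrand)
  finally show ?thesis .
qed

lemma
  assumes "Re x > 0" "Re y > 0"
  shows absolutely_integrable_Beta_complex:
      "(\<lambda>v. complex_of_real v powr (x - 1) * complex_of_real (1 - v) powr (y - 1))
         absolutely_integrable_on {0<..<1}" (is "?B absolutely_integrable_on _")
    and integral_Beta_complex:
      "integral {0<..<1} (\<lambda>v. complex_of_real v powr (x - 1) * complex_of_real (1 - v) powr (y - 1))
         = Beta x y"
proof -
  have "integrable lebesgue (Beta_integrand x y)"
    using integrable_Beta_integrand[OF assms] by (subst integrable_completion) auto
  then show integrable: "?B absolutely_integrable_on {0<..<1}"
    unfolding set_integrable_def Beta_integrand_def .
  have "Gamma (x + y) \<noteq> 0"
    using assms by (auto simp: Gamma_eq_zero_iff elim!: nonpos_Ints_cases dest!: arg_cong[where f=Re])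
  have "integral {0<..<1} ?B = (LINT v:{0<..<1}|lebesgue. ?B v)"
    by (rule set_lebesgue_integral_eq_integral(2)[symmetric, OF integrable])
  also have "\<dots> = integral\<^sup>L lebesgue (Beta_integrand x y)"
    unfolding set_lebesgue_integral_def Beta_integrand_def ..
  also have "\<dots> = integral\<^sup>L lborel (Beta_integrand x y)"
    by (rule integral_completion) simp
  also have "\<dots> = Beta x y"
    using Gamma_mult_Gamma_eq_Beta_integrand[OF assms] \<open>Gamma (x + y) \<noteq> 0\<close>
    by (simp add: Beta_def field_simps)
  finally show "integral {0<..<1} ?B = Beta x y" .
qed

section \<open>Reflection about the midpoint of the unit interval\<close>

lemma
  fixes f :: "real \<Rightarrow> 'a::euclidean_space"
  assumes "f absolutely_integrable_on {0<..<1}"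
  shows absolutely_integrable_reflect_01: "(\<lambda>v. f (1 - v)) absolutely_integrable_on {0<..<1}"
    and integral_reflect_01: "integral {0<..<1} (\<lambda>v. f (1 - v)) = integral {0<..<1} f"
proof -
  have image: "(\<lambda>v. 1 - v) ` {0<..<1::real} = {0<..<1}"
    by (auto simp: image_iff intro!: bexI[where x="1 - x" for x])
  have "(\<lambda>v. \<bar>-1\<bar> *\<^sub>R f (1 - v)) absolutely_integrable_on {0<..<1}
        \<and> integral {0<..<1} (\<lambda>v. \<bar>-1\<bar> *\<^sub>R f (1 - v)) = integral {0<..<1} f
     \<longleftrightarrow> f absolutely_integrable_on (\<lambda>v. 1 - v) ` {0<..<1}
        \<and> integral ((\<lambda>v. 1 - v) ` {0<..<1}) f = integral {0<..<1} f"
    by (rule has_absolute_integral_change_of_variables_real)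
       (auto intro!: derivative_eq_intros simp: inj_on_def)
  then show "(\<lambda>v. f (1 - v)) absolutely_integrable_on {0<..<1}"
    "integral {0<..<1} (\<lambda>v. f (1 - v)) = integral {0<..<1} f"
    using assms unfolding image by simp_all
qed

lemma
  fixes P g :: "real \<Rightarrow> complex"
  assumes P: "P absolutely_integrable_on {0<..<1}"
    and P_sym: "\<And>v. v \<in> {0<..<1} \<Longrightarrow> P (1 - v) = P v"
    and g: "continuous_on {0<..<1} g" "bounded (g ` {0<..<1})"
    and g_sym: "\<And>v. v \<in> {0<..<1} \<Longrightarrow> g v + g (1 - v) = 1"
  shows absolutely_integrable_symmetric_weight_01:
      "(\<lambda>v. g v * P v) absolutely_integrable_on {0<..<1}" (is "?gP absolutely_integrable_on _")
    and integral_symmetric_weight_01: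
      "integral {0<..<1} (\<lambda>v. g v * P v) = integral {0<..<1} P / 2"
proof -
  show gP: "?gP absolutely_integrable_on {0<..<1}"
    by (rule absolutely_integrable_bounded_measurable_product[OF bilinear_times
          continuous_imp_measurable_on_sets_lebesgue[OF g(1)] _ g(2) P]) auto
  have "integral {0<..<1} P = integral {0<..<1} (\<lambda>v. g v * P v + g (1 - v) * P (1 - v))"
    using P_sym g_sym by (intro integral_cong) (simp add: ring_distribs[symmetric])
  also have "\<dots> = integral {0<..<1} ?gP + integral {0<..<1} (\<lambda>v. g (1 - v) * P (1 - v))"
    using gP absolutely_integrable_reflect_01[OF gP]
    by (intro integral_add) (auto dest: set_lebesgue_integral_eq_integral(1))
  also have "\<dots> = 2 * integral {0<..<1} ?gP"
    using integral_reflect_01[OF gP] by simp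
  finally show "integral {0<..<1} ?gP = integral {0<..<1} P / 2"
    by simp
qed

section \<open>The substitution\<close>

lemma powr_of_real_divide:
  assumes "p \<ge> 0" "q > 0"
  shows "complex_of_real (p / q) powr z = of_real p powr z / of_real q powr z"
proof -
  have "complex_of_real p = of_real (p / q) * of_real q"
    using assms by (simp add: field_simps)
  then have "complex_of_real p powr z = of_real (p / q) powr z * of_real q powr z"
    using assms by (simp add: powr_times_real del: of_real_divide)
  then show ?thesis
    using assms by (simp add: eq_divide_eq del: of_real_divide)
qed

locale Beta_substitution =
  fixes a c :: real
  assumes X_pos': "\<And>t. t \<in> {0..1} \<Longrightarrow> c - a * (a + t) > 0"
    and Y_pos': "\<And>t. t \<in> {0..1} \<Longrightarrow> c - (a + 1) * (a + t) > 0"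
    and D_pos': "\<And>t. t \<in> {0..1} \<Longrightarrow> c - (a + t)^2 > 0"
begin

definition X :: "real \<Rightarrow> real" where "X t = c - a * (a + t)"
definition Y :: "real \<Rightarrow> real" where "Y t = c - (a + 1) * (a + t)"
definition D :: "real \<Rightarrow> real" where "D t = c - (a + t)^2"
definition K :: real where "K = c - (a + 1)^2"
definition E :: real where "E = c - a * (a + 1)"

definition u :: "real \<Rightarrow> real" where "u t = (1 - t) * X t / D t"
definition S :: "real \<Rightarrow> real" where "S t = E * D t - 2 * c * t * (1 - t)"
definition \<omega> :: "real \<Rightarrow> real" where
  "\<omega> v = E * (2 * v - 1) / sqrt (E^2 - 4 * c * (v * (1 - v)))"

lemma
  assumes "t \<in> {0..1}"
  shows X_pos: "X t > 0" and Y_pos: "Y t > 0" and D_pos: "D t > 0"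
  using X_pos'[OF assms] Y_pos'[OF assms] D_pos'[OF assms] by (simp_all add: X_def Y_def D_def)

lemma K_pos: "K > 0"
  using D_pos[of 1] by (simp add: K_def D_def)

lemma E_pos: "E > 0"
  using X_pos[of 1] by (simp add: E_def X_def)

lemma c_pos: "c > 0"
proof -
  have "a^2 < c"
    using D_pos[of 0] by (simp add: D_def)
  then show ?thesis
    by (smt (verit) zero_le_power2)
qed

lemma c_less_E_sq: "c < E^2"
proof -
  have "E^2 - c = D 0 * D 1"
    by (simp add: E_def D_def algebra_simps power2_eq_square)
  moreover have "D 0 * D 1 > 0"
    using D_pos[of 0] D_pos[of 1] by simp
  ultimately show ?thesis
    by linarith
qed

lemma D_eq: "D t = (1 - t) * X t + t * Y t"
  by (simp add: D_def X_def Y_def algebra_simps power2_eq_square)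

lemma S_sq: "S t ^ 2 = E^2 * D t ^ 2 - 4 * c * (t * (1 - t)) * (X t * Y t)"
proof -
  have XY: "X t * Y t = E * D t - c * t * (1 - t)"
    by (simp add: X_def Y_def D_def E_def algebra_simps power2_eq_square)
  show ?thesis
    unfolding S_def XY by (simp add: algebra_simps power2_eq_square)
qed

lemma S_sq_pos:
  assumes "t \<in> {0..1}"
  shows "S t ^ 2 > 0"
proof -
  have "4 * ((1 - t) * X t) * (t * Y t) \<le> ((1 - t) * X t + t * Y t)^2"
    using zero_le_power2[of "(1 - t) * X t - t * Y t"] by (simp add: power2_eq_square algebra_simps)
  then have "4 * (t * (1 - t)) * (X t * Y t) \<le> D t ^ 2"
    by (simp add: D_eq algebra_simps)
  then have "c * (4 * (t * (1 - t)) * (X t * Y t)) \<le> c * D t ^ 2"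
    using c_pos by (simp add: mult_left_mono)
  then have "(E^2 - c) * D t ^ 2 \<le> S t ^ 2"
    by (simp add: S_sq algebra_simps)
  moreover have "(E^2 - c) * D t ^ 2 > 0"
    using c_less_E_sq D_pos[OF assms] by simp
  ultimately show ?thesis
    by linarith
qed

lemma S_pos:
  assumes "t \<in> {0..1}"
  shows "S t > 0"
proof (rule ccontr)
  assume "\<not> S t > 0"
  moreover have "S 0 > 0"
    using E_pos D_pos[of 0] by (simp add: S_def)
  moreover have "\<forall>x. 0 \<le> x \<and> x \<le> t \<longrightarrow> isCont S x"
    unfolding S_def D_def by (auto intro!: continuous_intros)
  ultimately obtain x where "0 \<le> x" "x \<le> t" "S x = 0"
    using IVT2[of S t 0 0] assms by force
  then show False
    using S_sq_pos[of x] assms by auto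
qed

lemma one_minus_u: "t \<in> {0..1} \<Longrightarrow> 1 - u t = t * Y t / D t"
  using D_pos[of t] by (simp add: u_def D_eq field_simps)

lemma u_mem:
  assumes "t \<in> {0<..<1}"
  shows "u t \<in> {0<..<1}"
proof -
  have t: "t \<in> {0..1}" "0 < t" "t < 1"
    using assms by auto
  have "u t > 0"
    using X_pos[OF t(1)] D_pos[OF t(1)] t by (simp add: u_def)
  moreover have "1 - u t > 0"
    using Y_pos[OF t(1)] D_pos[OF t(1)] t by (simp add: one_minus_u)
  ultimately show ?thesis
    by simp
qed

lemma u_0: "u 0 = 1"
  using D_pos[of 0] by (simp add: u_def X_def D_def power2_eq_square)

lemma u_1: "u 1 = 0"
  by (simp add: u_def)

lemma u_has_real_derivative:
  assumes "t \<in> {0..1}"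
  shows "(u has_real_derivative - S t / D t ^ 2) (at t)"
proof -
  have "(u has_real_derivative
      ((- X t - (1 - t) * a) * D t + (1 - t) * X t * (2 * (a + t))) / (D t * D t)) (at t)"
    unfolding u_def[abs_def] X_def[abs_def] D_def[abs_def] using D_pos[OF assms]
    by (auto intro!: derivative_eq_intros simp: X_def D_def power2_eq_square algebra_simps)
  moreover have "((- X t - (1 - t) * a) * D t + (1 - t) * X t * (2 * (a + t))) / (D t * D t)
      = - S t / D t ^ 2"
    by (simp add: S_def X_def D_def E_def algebra_simps power2_eq_square)
  ultimately show ?thesis
    by simp
qed

lemma u_strict_antimono:
  assumes "x \<in> {0..1}" "y \<in> {0..1}" "x < y"
  shows "u y < u x"
proof (rule DERIV_neg_imp_decreasing[OF assms(3)])
  fix z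
  assume "x \<le> z" "z \<le> y"
  then have z: "z \<in> {0..1}"
    using assms by auto
  show "\<exists>d. (u has_real_derivative d) (at z) \<and> d < 0"
    using u_has_real_derivative[OF z] S_pos[OF z] D_pos[OF z] by force
qed

lemma inj_on_u: "inj_on u {0<..<1}"
proof (rule inj_onI)
  fix x y
  assume "x \<in> {0<..<1}" "y \<in> {0<..<1}" "u x = u y"
  then show "x = y"
    using u_strict_antimono[of x y] u_strict_antimono[of y x]
    by (cases x y rule: linorder_cases) auto
qed

lemma u_image: "u ` {0<..<1} = {0<..<1}"
proof
  show "u ` {0<..<1} \<subseteq> {0<..<1}"
    using u_mem by auto
  show "{0<..<1} \<subseteq> u ` {0<..<1}"
  proof
    fix y :: real
    assume y: "y \<in> {0<..<1}"
    have "\<forall>t. 0 \<le> t \<and> t \<le> 1 \<longrightarrow> isCont u t"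
      using u_has_real_derivative DERIV_isCont by auto
    then obtain t where "0 \<le> t" "t \<le> 1" "u t = y"
      using IVT2[of u 1 y 0] u_0 u_1 y by auto
    moreover have "t \<noteq> 0" "t \<noteq> 1"
      using \<open>u t = y\<close> u_0 u_1 y by auto
    ultimately show "y \<in> u ` {0<..<1}"
      by force
  qed
qed

lemma radicand_pos: "E^2 - 4 * c * (v * (1 - v)) > 0"
proof -
  have "v * (1 - v) \<le> 1 / 4"
    using zero_le_power2[of "v - 1 / 2"] by (simp add: power2_eq_square algebra_simps)
  then have "4 * c * (v * (1 - v)) \<le> c"
    using c_pos by (simp add: mult_left_mono)
  then show ?thesis
    using c_less_E_sq by linarith
qed

lemma abs_\<omega>_le_1:
  assumes "v \<in> {0..1}"
  shows "\<bar>\<omega> v\<bar> \<le> 1"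
proof -
  have "(E * (2 * v - 1))^2 = E^2 - 4 * E^2 * (v * (1 - v))"
    by (simp add: power2_eq_square algebra_simps)
  also have "\<dots> \<le> E^2 - 4 * c * (v * (1 - v))"
    using c_less_E_sq assms by (simp add: mult_right_mono)
  finally have "\<bar>E * (2 * v - 1)\<bar> \<le> sqrt (E^2 - 4 * c * (v * (1 - v)))"
    using real_sqrt_le_mono by fastforce
  then show ?thesis
    using radicand_pos[of v] by (simp add: \<omega>_def abs_div divide_le_eq_1)
qed

lemma \<omega>_reflect: "\<omega> (1 - v) = - \<omega> v"
proof -
  have "E * (2 * (1 - v) - 1) = - (E * (2 * v - 1))" "(1 - v) * (1 - (1 - v)) = v * (1 - v)"
    by (simp_all add: algebra_simps)
  then show ?thesis
    by (simp add: \<omega>_def)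
qed

lemma continuous_on_\<omega>: "continuous_on A \<omega>"
proof -
  have "sqrt (E^2 - 4 * c * (v * (1 - v))) \<noteq> 0" for v
    using radicand_pos[of v] by simp
  then show ?thesis
    unfolding \<omega>_def by (intro continuous_intros) auto
qed

lemma \<omega>_u:
  assumes "t \<in> {0..1}"
  shows "\<omega> (u t) = E * (2 * u t - 1) * D t / S t"
proof -
  have u_one_minus_u: "u t * (1 - u t) = t * (1 - t) * X t * Y t / D t ^ 2"
    unfolding one_minus_u[OF assms] using D_pos[OF assms]
    by (simp add: u_def field_simps power2_eq_square)
  have "E^2 - 4 * c * (u t * (1 - u t)) = (S t / D t)^2"
    unfolding u_one_minus_u S_sq power_divide using D_pos[OF assms] by (simp add: field_simps)
  then have "sqrt (E^2 - 4 * c * (u t * (1 - u t))) = S t / D t"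
    using S_pos[OF assms] D_pos[OF assms] by simp
  then show ?thesis
    using D_pos[OF assms] by (simp add: \<omega>_def)
qed

lemma weight_eq:
  assumes "t \<in> {0..1}"
  shows "K * t * X t / D t ^ 2 = S t / D t ^ 2 * ((1 - \<omega> (u t)) / 2)"
proof -
  have "S t - E * (2 * u t - 1) * D t = S t - 2 * E * (D t * u t) + E * D t"
    by (simp add: algebra_simps)
  also have "D t * u t = (1 - t) * X t"
    using D_pos[OF assms] by (simp add: u_def)
  also have "S t - 2 * E * ((1 - t) * X t) + E * D t = 2 * K * t * X t"
    by (simp add: S_def K_def E_def X_def D_def algebra_simps power2_eq_square)
  finally have "S t - E * (2 * u t - 1) * D t = 2 * K * t * X t" .
  then show ?thesis
    using D_pos[OF assms] S_pos[OF assms]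
    by (simp add: \<omega>_u[OF assms] field_simps power2_eq_square)
qed

definition F :: "complex \<Rightarrow> real \<Rightarrow> complex" where
  "F \<beta> v =
     of_real ((1 - \<omega> v) / 2) * (of_real v powr (\<beta> - 1) * of_real (1 - v) powr (\<beta> - 1))"

lemma
  assumes "Re \<beta> > 0"
  shows absolutely_integrable_F: "F \<beta> absolutely_integrable_on {0<..<1}"
    and integral_F: "integral {0<..<1} (F \<beta>) = Beta \<beta> \<beta> / 2"
proof -
  let ?g = "\<lambda>v. complex_of_real ((1 - \<omega> v) / 2)"
  let ?P = "\<lambda>v. complex_of_real v powr (\<beta> - 1) * complex_of_real (1 - v) powr (\<beta> - 1)"
  have F_eq: "F \<beta> = (\<lambda>v. ?g v * ?P v)"
    by (simp add: F_def fun_eq_iff)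
  have "norm (?g v) \<le> 1" if "v \<in> {0<..<1}" for v
    using abs_\<omega>_le_1[of v] that by (simp only: norm_of_real) auto
  then have bounded: "bounded (?g ` {0<..<1})"
    by (intro boundedI[of _ 1]) auto
  have continuous: "continuous_on {0<..<1} ?g"
    by (auto intro!: continuous_intros continuous_on_\<omega>)
  have g_sym: "?g v + ?g (1 - v) = 1" for v
    by (simp add: \<omega>_reflect field_simps)
  have P_sym: "?P (1 - v) = ?P v" for v
    by (simp add: mult.commute)
  note P = absolutely_integrable_Beta_complex[OF assms assms]
  show "F \<beta> absolutely_integrable_on {0<..<1}"
    unfolding F_eq
    by (rule absolutely_integrable_symmetric_weight_01[OF P P_sym continuous bounded g_sym])
  show "integral {0<..<1} (F \<beta>) = Beta \<beta> \<beta> / 2"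
    unfolding F_eq integral_symmetric_weight_01[OF P P_sym continuous bounded g_sym]
      integral_Beta_complex[OF assms assms] ..
qed

definition f :: "complex \<Rightarrow> real \<Rightarrow> complex" where
  "f \<beta> t = of_real (X t) powr \<beta> * of_real (Y t) powr (\<beta> - 1) / of_real (D t) powr (2 * \<beta>)
              * of_real t powr \<beta> * of_real (1 - t) powr (\<beta> - 1)"

lemma K_mult_f:
  assumes "t \<in> {0<..<1}"
  shows "of_real K * f \<beta> t = \<bar>- S t / D t ^ 2\<bar> *\<^sub>R F \<beta> (u t)"
proof -
  have t: "t \<in> {0..1}" "0 < t" "t < 1"
    using assms by auto
  note pos = X_pos[OF t(1)] Y_pos[OF t(1)] D_pos[OF t(1)] S_pos[OF t(1)]
  define w where "w = \<beta> - 1"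
  have split: "complex_of_real p powr \<beta> = of_real p powr w * of_real p" for p
  proof -
    have "complex_of_real p powr \<beta> = of_real p powr (w + 1)"
      by (simp add: w_def)
    then show ?thesis
      by (simp only: powr_add powr_to_1)
  qed
  have "complex_of_real (D t) powr (2 * \<beta>) = of_real (D t) powr (w + w + 2)"
    by (simp add: w_def)
  also have "\<dots> = of_real (D t) powr w * of_real (D t) powr w * of_real (D t) ^ 2"
    by (simp only: powr_add powr_complexnumeral)
  finally have D_split: "complex_of_real (D t) powr (2 * \<beta>)
      = of_real (D t) powr w * of_real (D t) powr w * of_real (D t) ^ 2" .
  have f_eq: "f \<beta> t = of_real (X t) powr w * of_real (X t) * of_real (Y t) powr w
      / (of_real (D t) powr w * of_real (D t) powr w * of_real (D t) ^ 2)
      * (of_real t powr w * of_real t) * of_real (1 - t) powr w"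
    unfolding f_def split D_split w_def[symmetric] ..
  have u_pow: "complex_of_real (u t) powr w
      = of_real (1 - t) powr w * of_real (X t) powr w / of_real (D t) powr w"
    using pos t
    by (simp add: u_def powr_of_real_divide powr_times_real del: of_real_diff of_real_divide)
  have one_minus_u_pow: "complex_of_real (1 - u t) powr w
      = of_real t powr w * of_real (Y t) powr w / of_real (D t) powr w"
    using pos t
    by (simp add: one_minus_u[OF t(1)] powr_of_real_divide powr_times_real
        del: of_real_diff of_real_divide)
  have "\<bar>- S t / D t ^ 2\<bar> *\<^sub>R F \<beta> (u t)
      = of_real (S t / D t ^ 2) * of_real ((1 - \<omega> (u t)) / 2)
        * (of_real (u t) powr w * of_real (1 - u t) powr w)"
    using pos by (simp add: F_def w_def scaleR_conv_of_real del: of_real_diff of_real_divide)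
  also have "\<dots>
      = of_real (K * t * X t / D t ^ 2) * (of_real (u t) powr w * of_real (1 - u t) powr w)"
    by (simp only: of_real_mult[symmetric] weight_eq[OF t(1)])
  also have "\<dots> = of_real K * f \<beta> t"
    unfolding f_eq u_pow one_minus_u_pow using pos t by (simp add: field_simps)
  finally show ?thesis ..
qed

lemma has_integral_f:
  assumes "Re \<beta> > 0"
  shows "(f \<beta> has_integral Beta \<beta> \<beta> / (2 * K)) {0..1}"
proof -
  let ?h = "\<lambda>t. \<bar>- S t / D t ^ 2\<bar> *\<^sub>R F \<beta> (u t)"
  have "(u has_real_derivative - S t / D t ^ 2) (at t within {0<..<1})" if "t \<in> {0<..<1}" for t
    using u_has_real_derivative[of t] that by (auto intro: has_field_derivative_at_within)
  then have "?h absolutely_integrable_on {0<..<1} \<and> integral {0<..<1} ?h = Beta \<beta> \<beta> / 2"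
    using has_absolute_integral_change_of_variables_real[of "{0<..<1}" u "\<lambda>t. - S t / D t ^ 2"
        "F \<beta>" "Beta \<beta> \<beta> / 2", OF _ _ inj_on_u]
      absolutely_integrable_F[OF assms] integral_F[OF assms]
    unfolding u_image by auto
  then have "(?h has_integral Beta \<beta> \<beta> / 2) {0<..<1}"
    using set_lebesgue_integral_eq_integral(1) has_integral_integrable_integral by blast
  then have "((\<lambda>t. of_real K * f \<beta> t) has_integral Beta \<beta> \<beta> / 2) {0<..<1}"
    by (rule has_integral_cong[THEN iffD1, rotated]) (simp add: K_mult_f)
  then have "((\<lambda>t. 1 / of_real K * (of_real K * f \<beta> t))
      has_integral 1 / of_real K * (Beta \<beta> \<beta> / 2)) {0<..<1}"
    by (rule has_integral_mult_right)
  then show ?thesis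
    using K_pos by (simp add: has_integral_Icc_iff_Ioo mult.commute)
qed

end

theorem mainTheorem9:
  fixes \<beta> :: complex and a c :: real
  assumes "Re \<beta> > 0"
    and "\<And>t. t \<in> {0..1} \<Longrightarrow> c - a * (a + t) > 0"
    and "\<And>t. t \<in> {0..1} \<Longrightarrow> c - (a + 1) * (a + t) > 0"
    and "\<And>t. t \<in> {0..1} \<Longrightarrow> c - (a + t)^2 > 0"
  shows "(\<lambda>t::real. (complex_of_real (c - a * (a + t)) powr \<beta>)
            * (complex_of_real (c - (a + 1) * (a + t)) powr (\<beta> - 1))
            / (complex_of_real (c - (a + t)^2) powr (2 * \<beta>))
            * (complex_of_real t powr \<beta>) * (complex_of_real (1 - t) powr (\<beta> - 1)))
           integrable_on {0..1}
     \<and> Gamma \<beta> * Gamma \<beta> / (2 * Gamma (2 * \<beta>)) =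
         complex_of_real (c - (a + 1)^2) *
         integral {0..1} (\<lambda>t::real. (complex_of_real (c - a * (a + t)) powr \<beta>)
            * (complex_of_real (c - (a + 1) * (a + t)) powr (\<beta> - 1))
            / (complex_of_real (c - (a + t)^2) powr (2 * \<beta>))
            * (complex_of_real t powr \<beta>) * (complex_of_real (1 - t) powr (\<beta> - 1)))"
proof -
  interpret Beta_substitution a c
    by unfold_locales (fact assms)+
  have f_integral: "(f \<beta> has_integral Beta \<beta> \<beta> / (2 * K)) {0..1}"
    using has_integral_f[OF assms(1)] .
  have "Gamma \<beta> * Gamma \<beta> / (2 * Gamma (2 * \<beta>)) = Beta \<beta> \<beta> / 2"
    by (simp add: Beta_def flip: mult_2)
  also have "\<dots> = of_real K * integral {0..1} (f \<beta>)"
    using integral_unique[OF f_integral] K_pos by simp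
  finally have "Gamma \<beta> * Gamma \<beta> / (2 * Gamma (2 * \<beta>)) = of_real K * integral {0..1} (f \<beta>)" .
  with f_integral have "f \<beta> integrable_on {0..1}
      \<and> Gamma \<beta> * Gamma \<beta> / (2 * Gamma (2 * \<beta>)) = of_real K * integral {0..1} (f \<beta>)"
    by blast
  then show ?thesis
    unfolding f_def[abs_def] X_def Y_def D_def K_def .
qed

end
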